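(* Elements $g,h\in B_3$ are conjugate in $B_3$ if and only if $\phi(g)$ and $\phi(h)$ are conjugate in $\mathrm{SL}_2(\mathbb{Z})$ and $\epsilon(g)=\epsilon(h)$.
   Context: $B_3=\langle\sigma_1,\sigma_2:\sigma_1\sigma_2\sigma_1=\sigma_2\sigma_1\sigma_2\rangle$ is the braid group on three strands. The homomorphism $\phi:B_3\to\mathrm{SL}_2(\mathbb{Z})$ is defined by $\phi(\sigma_1)=\begin{bmatrix}1&1\\0&1\end{bmatrix}$ and $\phi(\sigma_2)=\begin{bmatrix}1&0\\-1&1\end{bmatrix}$. The map $\epsilon:B_3\to\mathbb{Z}$ is the abelianization homomorphism with $\epsilon(\sigma_1)=\epsilon(\sigma_2)=1$ (the exponent sum). *)

theory Defs
  imports "HOL-Analysis.Analysis"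
begin

text \<open>B_3 presented as words in the letters sigma_1^(+-1), sigma_2^(+-1), modulo the
  congruence generated by free cancellation and the braid relation.\<close>

datatype gen = S1 | S2

type_synonym letter = "gen \<times> bool"   (* (generator, is_inverse) *)
type_synonym word = "letter list"

definition inv_letter :: "letter \<Rightarrow> letter" where
  "inv_letter a = (fst a, \<not> snd a)"

definition inv_word :: "word \<Rightarrow> word" where
  "inv_word w = rev (map inv_letter w)"

inductive braid_eq :: "word \<Rightarrow> word \<Rightarrow> bool" where
  refl: "braid_eq w w"
| sym: "braid_eq u v \<Longrightarrow> braid_eq v u"
| trans: "braid_eq u v \<Longrightarrow> braid_eq v w \<Longrightarrow> braid_eq u w"
| cancel: "braid_eq (u @ [a, inv_letter a] @ v) (u @ v)"
| braid_rel: "braid_eq (u @ [(S1,False),(S2,False),(S1,False)] @ v)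
                       (u @ [(S2,False),(S1,False),(S2,False)] @ v)"

definition conj_B3 :: "word \<Rightarrow> word \<Rightarrow> bool" where
  "conj_B3 g h \<longleftrightarrow> (\<exists>w. braid_eq (w @ g @ inv_word w) h)"

definition mat2 :: "int \<Rightarrow> int \<Rightarrow> int \<Rightarrow> int \<Rightarrow> int^2^2" where
  "mat2 a b c d = (\<chi> i j. if i = 1 then (if j = 1 then a else b) else (if j = 1 then c else d))"

fun phi_letter :: "letter \<Rightarrow> int^2^2" where
  "phi_letter (S1, False) = mat2 1 1 0 1"
| "phi_letter (S1, True) = mat2 1 (-1) 0 1"
| "phi_letter (S2, False) = mat2 1 0 (-1) 1"
| "phi_letter (S2, True) = mat2 1 0 1 1"

definition phi :: "word \<Rightarrow> int^2^2" where
  "phi w = foldr (\<lambda>a M. phi_letter a ** M) w (mat 1)"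

definition epsilon :: "word \<Rightarrow> int" where
  "epsilon w = sum_list (map (\<lambda>a. if snd a then -1 else 1) w)"

definition conj_SL2Z :: "int^2^2 \<Rightarrow> int^2^2 \<Rightarrow> bool" where
  "conj_SL2Z A B \<longleftrightarrow> (\<exists>P Q. det P = 1 \<and> P ** Q = mat 1 \<and> P ** A ** Q = B)"

end

theory Submission
  imports Defs
begin

text \<open>Put $x = \sigma_1\sigma_2\sigma_1$ and $y = \sigma_1\sigma_2$. Then $x^2 = y^3 = \Delta$ is
  central, and $\Delta\sigma_i^{\pm 1}$ is a positive word in $x$ and $y$, so every braid can be
  rewritten as $\Delta^k y^c b_1 \cdots b_n x^e$ with $c \le 2$ and blocks $b_i \in \{xy, xy^2\}$.
  Now $\phi(\Delta) = -I$, and $\phi(xy)$, $\phi(xy^2)$ play ping-pong on the matrices that, up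
  to sign, have positive diagonal and nonpositive, not both zero, off-diagonal entries. Hence a
  normal form is mapped to $\pm I$ only if it is a power of $\Delta$, and $\epsilon(\Delta) = 6$
  detects that power: $\phi \times \epsilon$ is injective. Since $\phi$ is onto
  $\mathrm{SL}_2(\mathbb{Z})$ by the Euclidean algorithm, a conjugator in $\mathrm{SL}_2(\mathbb{Z})$
  lifts to $B_3$, and injectivity finishes the argument because $\epsilon$ is a class function.\<close>

lemma mat2_mult [simp]:
  "mat2 a b c d ** mat2 a' b' c' d' =
     mat2 (a*a' + b*c') (a*b' + b*d') (c*a' + d*c') (c*b' + d*d')"
  by (simp add: mat2_def matrix_matrix_mult_def vec_eq_iff forall_2 sum_2)

lemma mat2_eq_iff [simp]:
  "mat2 a b c d = mat2 a' b' c' d' \<longleftrightarrow> a = a' \<and> b = b' \<and> c = c' \<and> d = d'"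
  by (auto simp: mat2_def vec_eq_iff forall_2)

lemma mat2_cases: obtains a b c d where "M = mat2 a b c d"
proof
  show "M = mat2 (M$1$1) (M$1$2) (M$2$1) (M$2$2)"
    by (simp add: mat2_def vec_eq_iff forall_2)
qed

lemma mat_1_eq_mat2: "(mat 1 :: int^2^2) = mat2 1 0 0 1"
  by (simp add: mat2_def mat_def vec_eq_iff forall_2)

lemma mat2_1_mult [simp]: "mat2 1 0 0 1 ** M = M"
  by (simp flip: mat_1_eq_mat2)

lemma mult_mat2_1 [simp]: "M ** mat2 1 0 0 1 = M"
  by (simp flip: mat_1_eq_mat2)

lemma det_mat2: "det (mat2 a b c d) = a*d - b*c"
  by (simp add: det_2 mat2_def)

lemma mat2_sign_left_inverse:
  assumes "t \<in> {1, -1}" and "mat2 t 0 0 t ** M = mat2 1 0 0 1"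
  shows "M = mat2 t 0 0 t"
  using assms by (cases M rule: mat2_cases) auto

lemma inv_letter_inv_letter [simp]: "inv_letter (inv_letter a) = a"
  by (simp add: inv_letter_def)

lemma inv_word_Nil [simp]: "inv_word [] = []"
  by (simp add: inv_word_def)

lemma inv_word_Cons [simp]: "inv_word (a # w) = inv_word w @ [inv_letter a]"
  by (simp add: inv_word_def)

lemma phi_Nil [simp]: "phi [] = mat2 1 0 0 1"
  by (simp add: phi_def mat_1_eq_mat2)

lemma phi_Cons [simp]: "phi (a # w) = phi_letter a ** phi w"
  by (simp add: phi_def)

lemma phi_append [simp]: "phi (u @ v) = phi u ** phi v"
  by (induction u) (auto simp: matrix_mul_assoc simp flip: mat_1_eq_mat2)

lemma det_phi: "det (phi w) = 1"
proof (induction w)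
  case (Cons a w)
  have "det (phi_letter a) = 1"
    by (cases a rule: phi_letter.cases) (auto simp: det_mat2)
  with Cons show ?case by (simp add: det_mul)
qed (simp add: det_mat2)

lemma phi_letter_inv_letter: "phi_letter a ** phi_letter (inv_letter a) = mat2 1 0 0 1"
  by (cases a rule: phi_letter.cases) (auto simp: inv_letter_def)

lemma epsilon_Nil [simp]: "epsilon [] = 0"
  by (simp add: epsilon_def)

lemma epsilon_Cons [simp]: "epsilon (a # w) = (if snd a then -1 else 1) + epsilon w"
  by (simp add: epsilon_def)

lemma epsilon_append [simp]: "epsilon (u @ v) = epsilon u + epsilon v"
  by (simp add: epsilon_def)

lemma epsilon_inv_word [simp]: "epsilon (inv_word w) = - epsilon w"
  by (induction w) (auto simp: inv_letter_def)

lemma epsilon_concat_replicate: "epsilon (concat (replicate n w)) = int n * epsilon w"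
  by (induction n) (auto simp: algebra_simps)

lemmas [trans] = braid_eq.trans
declare braid_eq.refl [simp]

lemma braid_eq_phi_eq: "braid_eq u v \<Longrightarrow> phi u = phi v"
proof (induction rule: braid_eq.induct)
  case (cancel u a v)
  have "phi_letter a ** (phi_letter (inv_letter a) ** phi v) = phi v"
    by (simp add: matrix_mul_assoc phi_letter_inv_letter)
  then show ?case by simp
next
  case (braid_rel u v)
  then show ?case by (simp add: matrix_mul_assoc)
qed auto

lemma braid_eq_epsilon_eq: "braid_eq u v \<Longrightarrow> epsilon u = epsilon v"
  by (induction rule: braid_eq.induct) (auto simp: inv_letter_def)

lemma braid_eq_append_cong: "braid_eq u v \<Longrightarrow> braid_eq (p @ u @ q) (p @ v @ q)"
proof (induction arbitrary: p q rule: braid_eq.induct)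
  case (cancel u a v)
  show ?case using braid_eq.cancel[of "p @ u" a "v @ q"] by simp
next
  case (braid_rel u v)
  show ?case using braid_eq.braid_rel[of "p @ u" "v @ q"] by simp
qed (blast intro: braid_eq.intros)+

lemma braid_eq_append_left: "braid_eq u v \<Longrightarrow> braid_eq (p @ u) (p @ v)"
  using braid_eq_append_cong[of u v p "[]"] by simp

lemma braid_eq_append_right: "braid_eq u v \<Longrightarrow> braid_eq (u @ q) (v @ q)"
  using braid_eq_append_cong[of u v "[]" q] by simp

lemma braid_eq_cancel_Cons: "braid_eq (a # inv_letter a # q) q"
  using braid_eq.cancel[of "[]" a q] by simp

lemma braid_eq_cancel_Cons': "braid_eq (inv_letter a # a # q) q"
  using braid_eq_cancel_Cons[of "inv_letter a" q] by simp

lemma braid_eq_append_inv_word: "braid_eq (w @ inv_word w) []"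
proof (induction w)
  case (Cons a w)
  have "braid_eq ([a] @ (w @ inv_word w) @ [inv_letter a]) ([a] @ [] @ [inv_letter a])"
    using Cons by (rule braid_eq_append_cong)
  also have "braid_eq \<dots> []"
    using braid_eq_cancel_Cons[of a "[]"] by simp
  finally show ?case by simp
qed simp

lemma braid_eq_inv_word_append: "braid_eq (inv_word w @ w) []"
proof (induction w)
  case (Cons a w)
  have "braid_eq (inv_word w @ [inv_letter a, a] @ w) (inv_word w @ w)"
    using braid_eq_append_cong[OF braid_eq_cancel_Cons'[of a "[]"]] by simp
  also note Cons
  finally show ?case by simp
qed simp

lemma phi_append_inv_word: "phi w ** phi (inv_word w) = mat2 1 0 0 1"
  using braid_eq_phi_eq[OF braid_eq_append_inv_word] by simp

lemma phi_inv_word_append: "phi (inv_word w) ** phi w = mat2 1 0 0 1"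
  using braid_eq_phi_eq[OF braid_eq_inv_word_append] by simp

section \<open>Central words and their powers\<close>

definition central :: "word \<Rightarrow> bool" where
  "central w \<longleftrightarrow> (\<forall>u. braid_eq (u @ w) (w @ u))"

lemma centralI_letters:
  assumes "\<And>a. braid_eq (a # w) (w @ [a])"
  shows "central w"
  unfolding central_def
proof
  fix u show "braid_eq (u @ w) (w @ u)"
  proof (induction u)
    case (Cons a u)
    have "braid_eq ([a] @ u @ w) ([a] @ w @ u)"
      using Cons by (rule braid_eq_append_left)
    also have "braid_eq ([a] @ w @ u) ((w @ [a]) @ u)"
      using braid_eq_append_right[OF assms[of a]] by simp
    finally show ?case by simp
  qed simp
qed

lemma commute_inv_letter:
  assumes "braid_eq (a # w) (w @ [a])"
  shows "braid_eq (inv_letter a # w) (w @ [inv_letter a])"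
proof -
  have "braid_eq (inv_letter a # w) (inv_letter a # w @ [a, inv_letter a])"
    using braid_eq_append_left[OF braid_eq_cancel_Cons[of a "[]"], of "inv_letter a # w"]
    by (simp add: braid_eq.sym)
  also have "braid_eq \<dots> ([inv_letter a] @ (a # w) @ [inv_letter a])"
    using braid_eq_append_cong[OF braid_eq.sym[OF assms], of "[inv_letter a]" "[inv_letter a]"]
    by simp
  also have "braid_eq \<dots> (w @ [inv_letter a])"
    using braid_eq_cancel_Cons' by simp
  finally show ?thesis .
qed

lemma central_Nil [simp]: "central []"
  by (simp add: central_def)

lemma central_append: "central v \<Longrightarrow> central w \<Longrightarrow> central (v @ w)"
  unfolding central_def
  by (metis append_assoc braid_eq.trans)

lemma central_concat_replicate: "central w \<Longrightarrow> central (concat (replicate n w))"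
  by (induction n) (simp_all add: central_append)

lemma central_inv_word:
  assumes "central w"
  shows "central (inv_word w)"
  unfolding central_def
proof
  fix u
  have "braid_eq (u @ inv_word w) (inv_word w @ (w @ u) @ inv_word w)"
    using braid_eq_append_right[OF braid_eq_inv_word_append[of w], of "u @ inv_word w"]
    by (simp add: braid_eq.sym)
  also have "braid_eq \<dots> (inv_word w @ (u @ w) @ inv_word w)"
    using assms unfolding central_def by (intro braid_eq_append_cong) (simp add: braid_eq.sym)
  also have "braid_eq \<dots> (inv_word w @ u)"
    using braid_eq_append_left[OF braid_eq_append_inv_word[of w], of "inv_word w @ u"] by simp
  finally show "braid_eq (u @ inv_word w) (inv_word w @ u)" .
qed

definition word_pow :: "word \<Rightarrow> int \<Rightarrow> word" where
  "word_pow w k =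
     (if 0 \<le> k then concat (replicate (nat k) w) else concat (replicate (nat (- k)) (inv_word w)))"

lemma word_pow_0 [simp]: "word_pow w 0 = []"
  by (simp add: word_pow_def)

lemma word_pow_1 [simp]: "word_pow w 1 = w"
  by (simp add: word_pow_def)

lemma word_pow_minus_1 [simp]: "word_pow w (-1) = inv_word w"
  by (simp add: word_pow_def)

lemma central_word_pow: "central w \<Longrightarrow> central (word_pow w k)"
  by (simp add: word_pow_def central_concat_replicate central_inv_word)

lemma epsilon_word_pow: "epsilon (word_pow w k) = k * epsilon w"
  by (simp add: word_pow_def epsilon_concat_replicate)

lemma word_pow_succ: "braid_eq (w @ word_pow w k) (word_pow w (k + 1))"
proof (cases "0 \<le> k")
  case True
  then have "nat (k + 1) = Suc (nat k)" by simp
  with True show ?thesis by (simp add: word_pow_def)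
next
  case False
  then have "nat (- k) = Suc (nat (- (k + 1)))" by simp
  with False have "word_pow w k = inv_word w @ word_pow w (k + 1)"
    by (simp add: word_pow_def)
  then show ?thesis
    using braid_eq_append_right[OF braid_eq_append_inv_word[of w]] by simp
qed

lemma word_pow_pred: "braid_eq (inv_word w @ word_pow w k) (word_pow w (k - 1))"
proof (cases "k \<le> 0")
  case True
  then have "nat (- (k - 1)) = Suc (nat (- k))" by simp
  with True show ?thesis by (simp add: word_pow_def)
next
  case False
  then have "nat k = Suc (nat (k - 1))" by simp
  with False have "word_pow w k = w @ word_pow w (k - 1)"
    by (simp add: word_pow_def)
  then show ?thesis
    using braid_eq_append_right[OF braid_eq_inv_word_append[of w]] by simp
qed

lemma word_pow_add: "braid_eq (word_pow w j @ word_pow w k) (word_pow w (j + k))"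
proof (induction j rule: int_induct[where k = 0])
  case (step1 j)
  have "braid_eq (word_pow w (j + 1) @ word_pow w k) (w @ word_pow w j @ word_pow w k)"
    using braid_eq_append_right[OF braid_eq.sym[OF word_pow_succ]] by simp
  also have "braid_eq \<dots> (w @ word_pow w (j + k))"
    using step1(2) by (rule braid_eq_append_left)
  also have "braid_eq \<dots> (word_pow w (j + 1 + k))"
    using word_pow_succ[of w "j + k"] by (simp add: ac_simps)
  finally show ?case .
next
  case (step2 j)
  have "braid_eq (word_pow w (j - 1) @ word_pow w k) (inv_word w @ word_pow w j @ word_pow w k)"
    using braid_eq_append_right[OF braid_eq.sym[OF word_pow_pred]] by simp
  also have "braid_eq \<dots> (inv_word w @ word_pow w (j + k))"
    using step2(2) by (rule braid_eq_append_left)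
  also have "braid_eq \<dots> (word_pow w (j - 1 + k))"
    using word_pow_pred[of w "j + k"] by (simp add: algebra_simps)
  finally show ?case .
qed simp

lemma phi_word_pow_sign:
  assumes "phi w = mat2 s 0 0 s" and "s \<in> {1, -1}"
  obtains t where "t \<in> {1, -1}" and "phi (word_pow w k) = mat2 t 0 0 t"
proof -
  have power: "\<exists>t \<in> {1, -1}. phi (concat (replicate n v)) = mat2 t 0 0 t"
    if "phi v = mat2 s 0 0 s" for v n
    using that assms(2) by (induction n) (auto intro: bexI[of _ "- _"])
  have "phi (inv_word w) = mat2 s 0 0 s"
    using mat2_sign_left_inverse assms phi_append_inv_word by metis
  then have "\<exists>t \<in> {1, -1}. phi (word_pow w k) = mat2 t 0 0 t"
    unfolding word_pow_def using power assms(1) by simp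
  with that show ?thesis by blast
qed

section \<open>The Garside element and normal forms\<close>

abbreviation \<sigma>\<^sub>1 :: letter where "\<sigma>\<^sub>1 \<equiv> (S1, False)"
abbreviation \<sigma>\<^sub>2 :: letter where "\<sigma>\<^sub>2 \<equiv> (S2, False)"

definition X_word :: word where "X_word = [\<sigma>\<^sub>1, \<sigma>\<^sub>2, \<sigma>\<^sub>1]"
definition Y_word :: word where "Y_word = [\<sigma>\<^sub>1, \<sigma>\<^sub>2]"
definition Delta :: word where "Delta = Y_word @ Y_word @ Y_word"

lemma phi_X_word: "phi X_word = mat2 0 1 (-1) 0"
  by (simp add: X_word_def)

lemma phi_Y_word: "phi Y_word = mat2 0 1 (-1) 1"
  by (simp add: Y_word_def)

lemma phi_Delta: "phi Delta = mat2 (-1) 0 0 (-1)"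
  by (simp add: Delta_def phi_Y_word)

lemma epsilon_Delta: "epsilon Delta = 6"
  by (simp add: Delta_def Y_word_def)

lemma X_word_X_word: "braid_eq (X_word @ X_word) Delta"
  using braid_eq.braid_rel[of "[\<sigma>\<^sub>1, \<sigma>\<^sub>2, \<sigma>\<^sub>1]" "[]"] by (simp add: X_word_def Delta_def Y_word_def)

lemma Cons_X_word_X_word:
  assumes "a \<in> {\<sigma>\<^sub>1, \<sigma>\<^sub>2}"
  shows "braid_eq (a # X_word @ X_word) (X_word @ X_word @ [a])"
proof -
  \<comment> \<open>conjugation by $x = \sigma_1\sigma_2\sigma_1$ swaps $\sigma_1$ and $\sigma_2$\<close>
  obtain b where ab: "braid_eq (a # X_word) (X_word @ [b])" and ba: "braid_eq (b # X_word) (X_word @ [a])"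
  proof
    show "braid_eq (a # X_word) (X_word @ [if a = \<sigma>\<^sub>1 then \<sigma>\<^sub>2 else \<sigma>\<^sub>1])"
         "braid_eq ((if a = \<sigma>\<^sub>1 then \<sigma>\<^sub>2 else \<sigma>\<^sub>1) # X_word) (X_word @ [a])"
      using assms braid_eq.braid_rel[of "[\<sigma>\<^sub>1]" "[]"] braid_eq.braid_rel[of "[]" "[\<sigma>\<^sub>1]"]
      by (auto simp: X_word_def intro: braid_eq.sym)
  qed
  have "braid_eq ((a # X_word) @ X_word) ((X_word @ [b]) @ X_word)"
    using ab by (rule braid_eq_append_right)
  also have "braid_eq \<dots> (X_word @ X_word @ [a])"
    using braid_eq_append_left[OF ba, of X_word] by simp
  finally show ?thesis by simp
qed

lemma central_Delta: "central Delta"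
proof (rule centralI_letters)
  have positive: "braid_eq (a # Delta) (Delta @ [a])" if "a \<in> {\<sigma>\<^sub>1, \<sigma>\<^sub>2}" for a
  proof -
    have "braid_eq (a # Delta) (a # X_word @ X_word)"
      using braid_eq_append_left[OF braid_eq.sym[OF X_word_X_word], of "[a]"] by simp
    also have "braid_eq \<dots> (X_word @ X_word @ [a])"
      using that by (rule Cons_X_word_X_word)
    also have "braid_eq \<dots> (Delta @ [a])"
      using braid_eq_append_right[OF X_word_X_word, of "[a]"] by simp
    finally show ?thesis .
  qed
  fix a :: letter
  obtain g b where a: "a = (g, b)" by fastforce
  have "(g, False) \<in> {\<sigma>\<^sub>1, \<sigma>\<^sub>2}" by (cases g) auto
  note commute = positive[OF this]
  show "braid_eq (a # Delta) (Delta @ [a])"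
  proof (cases b)
    case True
    then have "a = inv_letter (g, False)" by (simp add: a inv_letter_def)
    then show ?thesis using commute_inv_letter[OF commute] by simp
  qed (use commute a in simp)
qed

lemma Delta_letter_braid_eq_XY_word:
  obtains ws where "set ws \<subseteq> {X_word, Y_word}" and "braid_eq (Delta @ [a]) (concat ws)"
proof (cases a rule: phi_letter.cases)
  case 1
  then have "Delta @ [a] = concat [Y_word, Y_word, X_word]"
    by (simp add: Delta_def X_word_def Y_word_def)
  with that[of "[Y_word, Y_word, X_word]"] show ?thesis by simp
next
  case 2
  have "braid_eq (Delta @ [a]) (X_word @ X_word @ [a])"
    using braid_eq_append_right[OF braid_eq.sym[OF X_word_X_word]] by simp
  also have "braid_eq \<dots> (concat [X_word, Y_word])"
    using braid_eq.cancel[of "[\<sigma>\<^sub>1, \<sigma>\<^sub>2, \<sigma>\<^sub>1, \<sigma>\<^sub>1, \<sigma>\<^sub>2]" "\<sigma>\<^sub>1" "[]"] 2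
    by (simp add: X_word_def Y_word_def inv_letter_def)
  finally show ?thesis using that[of "[X_word, Y_word]"] by simp
next
  case 3
  have "braid_eq (Delta @ [a]) (X_word @ X_word @ [a])"
    using braid_eq_append_right[OF braid_eq.sym[OF X_word_X_word]] by simp
  also have "X_word @ X_word @ [a] = concat [X_word, Y_word, Y_word]"
    using 3 by (simp add: X_word_def Y_word_def)
  finally show ?thesis using that[of "[X_word, Y_word, Y_word]"] by simp
next
  case 4
  have "braid_eq (Delta @ [a]) (concat [Y_word, X_word])"
    using braid_eq.cancel[of "[\<sigma>\<^sub>1, \<sigma>\<^sub>2, \<sigma>\<^sub>1, \<sigma>\<^sub>2, \<sigma>\<^sub>1]" "\<sigma>\<^sub>2" "[]"] 4
    by (simp add: Delta_def X_word_def Y_word_def inv_letter_def)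
  then show ?thesis using that[of "[Y_word, X_word]"] by simp
qed

text \<open>The normal form of $B_3/\langle\Delta\rangle \cong \mathbb{Z}/2 * \mathbb{Z}/3$, lifted to $B_3$:
  \<open>nf_tail c bs e\<close> is $y^c b_1 \cdots b_n x^e$, where \<open>True\<close> encodes the block $xy^2$.\<close>

definition block :: "bool \<Rightarrow> word" where
  "block b = X_word @ Y_word @ (if b then Y_word else [])"

definition nf_tail :: "nat \<Rightarrow> bool list \<Rightarrow> bool \<Rightarrow> word" where
  "nf_tail c bs e = concat (replicate c Y_word) @ concat (map block bs) @ (if e then X_word else [])"

definition has_nf :: "word \<Rightarrow> bool" where
  "has_nf u \<longleftrightarrow> (\<exists>k c bs e. c \<le> 2 \<and> braid_eq u (word_pow Delta k @ nf_tail c bs e))"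

lemma has_nf_braid_eq: "braid_eq u v \<Longrightarrow> has_nf v \<Longrightarrow> has_nf u"
  unfolding has_nf_def by (meson braid_eq.trans)

lemma has_nf_nf_tail: "c \<le> 2 \<Longrightarrow> has_nf (nf_tail c bs e)"
  unfolding has_nf_def by (metis append_Nil braid_eq.refl word_pow_0)

lemma has_nf_Delta_pow_append:
  assumes "has_nf u"
  shows "has_nf (word_pow Delta j @ u)"
proof -
  obtain k c bs e where "c \<le> 2" and u: "braid_eq u (word_pow Delta k @ nf_tail c bs e)"
    using assms unfolding has_nf_def by blast
  have "braid_eq (word_pow Delta j @ u) ((word_pow Delta j @ word_pow Delta k) @ nf_tail c bs e)"
    using braid_eq_append_left[OF u] by simp
  also have "braid_eq \<dots> (word_pow Delta (j + k) @ nf_tail c bs e)"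
    using word_pow_add by (rule braid_eq_append_right)
  finally show ?thesis
    using \<open>c \<le> 2\<close> unfolding has_nf_def by blast
qed

lemma has_nf_append:
  assumes "\<And>c bs e. c \<le> 2 \<Longrightarrow> has_nf (w @ nf_tail c bs e)" and "has_nf u"
  shows "has_nf (w @ u)"
proof -
  obtain k c bs e where "c \<le> 2" and u: "braid_eq u (word_pow Delta k @ nf_tail c bs e)"
    using assms(2) unfolding has_nf_def by blast
  have "braid_eq (w @ u) ((w @ word_pow Delta k) @ nf_tail c bs e)"
    using braid_eq_append_left[OF u] by simp
  also have "braid_eq \<dots> (word_pow Delta k @ w @ nf_tail c bs e)"
    using central_word_pow[OF central_Delta] unfolding central_def
    by (metis append_assoc braid_eq_append_right)
  finally show ?thesis
    using has_nf_braid_eq has_nf_Delta_pow_append assms(1) \<open>c \<le> 2\<close> by blast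
qed

lemma has_nf_Y_word_nf_tail:
  assumes "c \<le> 2"
  shows "has_nf (Y_word @ nf_tail c bs e)"
proof (cases "c = 2")
  case True
  then have "Y_word @ nf_tail c bs e = word_pow Delta 1 @ nf_tail 0 bs e"
    by (simp add: nf_tail_def Delta_def numeral_2_eq_2)
  then show ?thesis
    using has_nf_Delta_pow_append[of "nf_tail 0 bs e" 1] has_nf_nf_tail[of 0 bs e] by simp
next
  case False
  then have "Y_word @ nf_tail c bs e = nf_tail (Suc c) bs e"
    by (simp add: nf_tail_def)
  then show ?thesis
    using False assms has_nf_nf_tail by simp
qed

lemma has_nf_X_word_nf_tail:
  assumes "c \<le> 2"
  shows "has_nf (X_word @ nf_tail c bs e)"
proof -
  consider "c = 0" "bs = []" | b bs' where "c = 0" "bs = b # bs'" | "c = 1" | "c = 2"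
    using assms by (cases bs) fastforce+
  then show ?thesis
  proof cases
    case 1
    show ?thesis
    proof (cases e)
      case True
      have "braid_eq (X_word @ nf_tail c bs e) (word_pow Delta 1 @ nf_tail 0 [] False)"
        using 1 True X_word_X_word by (simp add: nf_tail_def)
      then show ?thesis
        using has_nf_braid_eq has_nf_Delta_pow_append has_nf_nf_tail by blast
    next
      case False
      then have "X_word @ nf_tail c bs e = nf_tail 0 [] True"
        using 1 by (simp add: nf_tail_def)
      then show ?thesis using has_nf_nf_tail by simp
    qed
  next
    case (2 b bs')
    define c' where "c' = (if b then 2 else 1 :: nat)"
    have "X_word @ nf_tail c bs e = (X_word @ X_word) @ nf_tail c' bs' e"
      using 2 by (simp add: nf_tail_def block_def c'_def numeral_2_eq_2)
    also have "braid_eq \<dots> (word_pow Delta 1 @ nf_tail c' bs' e)"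
      using braid_eq_append_right[OF X_word_X_word] by simp
    finally have "braid_eq (X_word @ nf_tail c bs e) (word_pow Delta 1 @ nf_tail c' bs' e)" .
    moreover have "has_nf (word_pow Delta 1 @ nf_tail c' bs' e)"
      by (intro has_nf_Delta_pow_append has_nf_nf_tail) (simp add: c'_def)
    ultimately show ?thesis
      by (rule has_nf_braid_eq)
  next
    case 3
    then have "X_word @ nf_tail c bs e = nf_tail 0 (False # bs) e"
      by (simp add: nf_tail_def block_def)
    then show ?thesis using has_nf_nf_tail by simp
  next
    case 4
    then have "X_word @ nf_tail c bs e = nf_tail 0 (True # bs) e"
      by (simp add: nf_tail_def block_def numeral_2_eq_2)
    then show ?thesis using has_nf_nf_tail by simp
  qed
qed

lemma has_nf_concat_XY_word:
  "set ws \<subseteq> {X_word, Y_word} \<Longrightarrow> has_nf u \<Longrightarrow> has_nf (concat ws @ u)"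
  by (induction ws) (auto intro: has_nf_append has_nf_X_word_nf_tail has_nf_Y_word_nf_tail)

lemma has_nf_Cons:
  assumes "has_nf u"
  shows "has_nf (a # u)"
proof -
  obtain ws where ws: "set ws \<subseteq> {X_word, Y_word}" and a: "braid_eq (Delta @ [a]) (concat ws)"
    by (rule Delta_letter_braid_eq_XY_word)
  have "braid_eq (a # u) (inv_word Delta @ (Delta @ [a]) @ u)"
    using braid_eq_append_right[OF braid_eq_inv_word_append[of Delta], of "a # u"]
    by (simp add: braid_eq.sym)
  also have "braid_eq \<dots> (word_pow Delta (-1) @ concat ws @ u)"
    using braid_eq_append_cong[OF a] by simp
  finally show ?thesis
    using has_nf_braid_eq has_nf_Delta_pow_append has_nf_concat_XY_word[OF ws assms] by blast
qed

lemma has_nf: "has_nf u"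
proof (induction u)
  case Nil
  show ?case using has_nf_nf_tail[of 0 "[]" False] by (simp add: nf_tail_def)
qed (rule has_nf_Cons)

section \<open>Injectivity of $\phi \times \epsilon$\<close>

lemma phi_block: "phi (block b) = (if b then mat2 (-1) 0 1 (-1) else mat2 (-1) 1 0 (-1))"
  by (simp add: block_def phi_X_word phi_Y_word)

lemma phi_concat_blocks:
  assumes "bs \<noteq> []"
  shows "\<exists>s a b c d. s \<in> {1, -1} \<and> a \<ge> 1 \<and> d \<ge> 1 \<and> b \<le> 0 \<and> c \<le> 0 \<and> b + c \<le> -1 \<and>
           phi (concat (map block bs)) = mat2 (s*a) (s*b) (s*c) (s*d)"
  using assms
proof (induction bs rule: list_nonempty_induct)
  case (single x)
  show ?case
  proof (cases x)
    case True
    then show ?thesis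
      by (intro exI[of _ "-1"] exI[of _ 1] exI[of _ 0] exI[of _ "-1"] exI[of _ 1]) (simp add: phi_block)
  next
    case False
    then show ?thesis
      by (intro exI[of _ "-1"] exI[of _ 1] exI[of _ "-1"] exI[of _ 0] exI[of _ 1]) (simp add: phi_block)
  qed
next
  case (cons x bs)
  then obtain s a b c d
    where bounds: "s \<in> {1, -1}" "a \<ge> 1" "d \<ge> 1" "b \<le> 0" "c \<le> 0" "b + c \<le> -1"
      and bs: "phi (concat (map block bs)) = mat2 (s*a) (s*b) (s*c) (s*d)"
    by blast
  show ?case
  proof (cases x)
    case True
    then show ?thesis using bounds
      by (intro exI[of _ "-s"] exI[of _ a] exI[of _ b] exI[of _ "c - a"] exI[of _ "d - b"])
        (auto simp: bs phi_block algebra_simps)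
  next
    case False
    then show ?thesis using bounds
      by (intro exI[of _ "-s"] exI[of _ "a - c"] exI[of _ "b - d"] exI[of _ c] exI[of _ d])
        (auto simp: bs phi_block algebra_simps)
  qed
qed

lemma nf_tail_trivial_if_phi_sign:
  assumes "c \<le> 2" and "t \<in> {1, -1}" and phi: "phi (nf_tail c bs e) = mat2 t 0 0 t"
  shows "c = 0 \<and> bs = [] \<and> \<not> e"
proof -
  have c: "c = 0 \<or> c = 1 \<or> c = 2"
    using assms(1) by auto
  show ?thesis
  proof (cases "bs = []")
    case True
    with c phi assms(2) show ?thesis
      by (cases e) (auto simp: nf_tail_def phi_X_word phi_Y_word numeral_2_eq_2)
  next
    case False
    with phi_concat_blocks obtain s a b c' d where
      "s \<in> {1, -1}" "a \<ge> 1" "d \<ge> 1" "b \<le> 0" "c' \<le> 0" "b + c' \<le> -1"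
      and bs: "phi (concat (map block bs)) = mat2 (s*a) (s*b) (s*c') (s*d)"
      by blast
    with c phi assms(2) have False
      by (cases e) (auto simp: nf_tail_def bs phi_X_word phi_Y_word numeral_2_eq_2)
    then show ?thesis ..
  qed
qed

lemma braid_eq_Nil_if_phi_epsilon:
  assumes "phi u = mat2 1 0 0 1" and "epsilon u = 0"
  shows "braid_eq u []"
proof -
  obtain k c bs e where "c \<le> 2" and u: "braid_eq u (word_pow Delta k @ nf_tail c bs e)"
    using has_nf unfolding has_nf_def by blast
  obtain t where t: "t \<in> {1, -1}" and phi_Delta_pow: "phi (word_pow Delta k) = mat2 t 0 0 t"
    using phi_word_pow_sign[OF phi_Delta] by auto
  have "mat2 t 0 0 t ** phi (nf_tail c bs e) = mat2 1 0 0 1"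
    using braid_eq_phi_eq[OF u] assms(1) phi_Delta_pow by simp
  then have "phi (nf_tail c bs e) = mat2 t 0 0 t"
    using t by (rule mat2_sign_left_inverse[rotated])
  then have "c = 0 \<and> bs = [] \<and> \<not> e"
    using nf_tail_trivial_if_phi_sign[OF \<open>c \<le> 2\<close> t] by blast
  then have "nf_tail c bs e = []"
    by (simp add: nf_tail_def)
  moreover have "k = 0"
    using braid_eq_epsilon_eq[OF u] assms(2) \<open>nf_tail c bs e = []\<close>
    by (simp add: epsilon_word_pow epsilon_Delta)
  ultimately show ?thesis
    using u by simp
qed

lemma braid_eq_if_phi_epsilon_eq:
  assumes "phi u = phi v" and "epsilon u = epsilon v"
  shows "braid_eq u v"
proof -
  have "braid_eq (u @ inv_word v) []"
    using assms phi_append_inv_word[of v] by (intro braid_eq_Nil_if_phi_epsilon) simp_all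
  then have "braid_eq ((u @ inv_word v) @ v) v"
    using braid_eq_append_right by fastforce
  moreover have "braid_eq u (u @ inv_word v @ v)"
    using braid_eq_append_left[OF braid_eq_inv_word_append[of v], of u] by (simp add: braid_eq.sym)
  ultimately show ?thesis
    by (simp add: braid_eq.trans)
qed

section \<open>Surjectivity of $\phi$\<close>

lemma phi_word_pow_sigma1: "phi (word_pow [\<sigma>\<^sub>1] q) = mat2 1 q 0 1"
proof -
  have "phi (concat (replicate n [(S1, b)])) = mat2 1 (if b then - int n else int n) 0 1" for n b
    by (induction n) (auto simp: algebra_simps)
  then show ?thesis
    by (simp add: word_pow_def inv_letter_def)
qed

lemma phi_surjective: "a*d - b*c = 1 \<Longrightarrow> \<exists>w. phi w = mat2 a b c d"
proof (induction "nat \<bar>c\<bar>" arbitrary: a b c d rule: less_induct)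
  case less
  show ?case
  proof (cases "c = 0")
    case True
    then have "a = d \<and> (a = 1 \<or> a = -1)"
      using less.prems by (auto simp: zmult_eq_1_iff)
    then have "phi (word_pow Delta (if a = 1 then 0 else 1) @ word_pow [\<sigma>\<^sub>1] (a * b)) = mat2 a b c d"
      using True by (auto simp: phi_Delta phi_word_pow_sigma1)
    then show ?thesis by blast
  next
    case False
    \<comment> \<open>one step of the Euclidean algorithm on the first column\<close>
    define q where "q = a div c"
    define r where "r = a mod c"
    have a: "a = q*c + r"
      by (simp add: q_def r_def)
    have "nat \<bar>r\<bar> < nat \<bar>c\<bar>"
      using abs_mod_less[of c a] False by (simp add: r_def)
    moreover have "(-c) * (b - q*d) - (-d) * r = 1"
      using less.prems a by (simp add: algebra_simps)
    ultimately obtain w where w: "phi w = mat2 (-c) (-d) r (b - q*d)"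
      using less.hyps by blast
    have "phi (word_pow [\<sigma>\<^sub>1] q @ X_word @ w) = mat2 a b c d"
      using a by (simp add: phi_word_pow_sigma1 phi_X_word w algebra_simps)
    then show ?thesis by blast
  qed
qed

lemma conj_SL2Z_phi_iff: "conj_SL2Z (phi g) (phi h) \<longleftrightarrow> (\<exists>w. phi (w @ g @ inv_word w) = phi h)"
proof
  assume "conj_SL2Z (phi g) (phi h)"
  then obtain P Q where "det P = 1" and PQ: "P ** Q = mat 1" and conj: "P ** phi g ** Q = phi h"
    unfolding conj_SL2Z_def by blast
  obtain a b c d where "P = mat2 a b c d"
    by (rule mat2_cases)
  then obtain w where w: "phi w = P"
    using \<open>det P = 1\<close> phi_surjective by (metis det_mat2)
  have "Q = (phi (inv_word w) ** P) ** Q"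
    using phi_inv_word_append[of w] w by simp
  also have "\<dots> = phi (inv_word w)"
    using PQ by (simp flip: matrix_mul_assoc add: mat_1_eq_mat2)
  finally show "\<exists>w. phi (w @ g @ inv_word w) = phi h"
    using conj w by (auto simp: matrix_mul_assoc)
next
  assume "\<exists>w. phi (w @ g @ inv_word w) = phi h"
  then obtain w where "phi w ** phi g ** phi (inv_word w) = phi h"
    by (auto simp: matrix_mul_assoc)
  then show "conj_SL2Z (phi g) (phi h)"
    unfolding conj_SL2Z_def using det_phi phi_append_inv_word by (fastforce simp: mat_1_eq_mat2)
qed

theorem proposition2p5:
  fixes g h :: word
  shows "conj_B3 g h \<longleftrightarrow> conj_SL2Z (phi g) (phi h) \<and> epsilon g = epsilon h"
proof -
  have "braid_eq (w @ g @ inv_word w) h \<longleftrightarrow>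
          phi (w @ g @ inv_word w) = phi h \<and> epsilon g = epsilon h" for w
    using braid_eq_phi_eq braid_eq_epsilon_eq braid_eq_if_phi_epsilon_eq
    by (metis add.commute add_minus_cancel epsilon_append epsilon_inv_word)
  then show ?thesis
    unfolding conj_B3_def conj_SL2Z_phi_iff by blast
qed

end
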